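(* For any sets $X,Y$ and any $f:X\to\mathcal W(Y)$, the map $f^\dagger:\mathcal W(X)\to\mathcal W(Y)$ is a total function; that is, for every $m\in\mathcal W(X)$ the sums defining $f^\dagger(m)$ are defined and $f^\dagger(m)\in\mathcal W(Y)$.
   Context: $\mathcal A=\langle U,+,\cdot,\mathbf 0,\mathbf 1\rangle$ is a partial semiring ($+$ commutative, associative, possibly partial, unit $\mathbf 0$; $\cdot$ total, associative, unit $\mathbf 1$; two-sided distributivity; $\mathbf 0$ annihilates), naturally ordered ($u\le v$ iff $\exists w.\,u+w=v$ is a partial order), Scott continuous ($+$ and $\cdot$ preserve suprema of directed sets in each argument), with a top element. Infinite sums are suprema of finite partial sums. $\mathcal W(X)$ is the set of $m:X\to U$ whose support $\mathrm{supp}(m)=\{x:m(x)\ne\mathbf 0\}$ is countable and whose mass $|m|=\sum_{x\in\mathrm{supp}(m)}m(x)$ is defined. $f^\dagger(m)(y)=\sum_{x\in\mathrm{supp}(m)}m(x)\cdot f(x)(y)$. *)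

theory Defs
  imports Main "HOL-Library.Countable_Set"
begin

text \<open>A partial semiring is given by a partial addition padd (None = undefined),
  a total multiplication mult, and constants zero, one on a carrier type 'u.\<close>

definition nat_le :: "('u \<Rightarrow> 'u \<Rightarrow> 'u option) \<Rightarrow> 'u \<Rightarrow> 'u \<Rightarrow> bool" where
  "nat_le padd u v \<longleftrightarrow> (\<exists>w. padd u w = Some v)"

definition is_lub_in :: "('u \<Rightarrow> 'u \<Rightarrow> bool) \<Rightarrow> 'u set \<Rightarrow> 'u \<Rightarrow> bool" where
  "is_lub_in le D s \<longleftrightarrow> (\<forall>d\<in>D. le d s) \<and> (\<forall>b. (\<forall>d\<in>D. le d b) \<longrightarrow> le s b)"

definition directed_in :: "('u \<Rightarrow> 'u \<Rightarrow> bool) \<Rightarrow> 'u set \<Rightarrow> bool" where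
  "directed_in le D \<longleftrightarrow> D \<noteq> {} \<and> (\<forall>a\<in>D. \<forall>b\<in>D. \<exists>c\<in>D. le a c \<and> le b c)"

definition partial_semiring ::
  "('u \<Rightarrow> 'u \<Rightarrow> 'u option) \<Rightarrow> ('u \<Rightarrow> 'u \<Rightarrow> 'u) \<Rightarrow> 'u \<Rightarrow> 'u \<Rightarrow> bool" where
  "partial_semiring padd mult zero one \<longleftrightarrow>
     (\<forall>x y. padd x y = padd y x) \<and>
     (\<forall>x y z. Option.bind (padd x y) (\<lambda>a. padd a z) = Option.bind (padd y z) (\<lambda>b. padd x b)) \<and>
     (\<forall>x. padd zero x = Some x) \<and>
     (\<forall>x y z. mult (mult x y) z = mult x (mult y z)) \<and>
     (\<forall>x. mult one x = x \<and> mult x one = x) \<and>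
     (\<forall>x y z s. padd y z = Some s \<longrightarrow>
         padd (mult x y) (mult x z) = Some (mult x s) \<and>
         padd (mult y x) (mult z x) = Some (mult s x)) \<and>
     (\<forall>x. mult zero x = zero \<and> mult x zero = zero)"

definition naturally_ordered :: "('u \<Rightarrow> 'u \<Rightarrow> 'u option) \<Rightarrow> bool" where
  "naturally_ordered padd \<longleftrightarrow>
     (\<forall>u v. nat_le padd u v \<and> nat_le padd v u \<longrightarrow> u = v)"

definition scott_continuous ::
  "('u \<Rightarrow> 'u \<Rightarrow> 'u option) \<Rightarrow> ('u \<Rightarrow> 'u \<Rightarrow> 'u) \<Rightarrow> bool" where
  "scott_continuous padd mult \<longleftrightarrow>
     (\<forall>D. directed_in (nat_le padd) D \<longrightarrow> (\<exists>s. is_lub_in (nat_le padd) D s)) \<and>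
     (\<forall>D s x. directed_in (nat_le padd) D \<longrightarrow> is_lub_in (nat_le padd) D s \<longrightarrow>
        ((\<forall>d\<in>D. padd x d \<noteq> None) \<longrightarrow>
           (\<exists>t. padd x s = Some t \<and> is_lub_in (nat_le padd) {the (padd x d) | d. d \<in> D} t)) \<and>
        is_lub_in (nat_le padd) ((\<lambda>d. mult x d) ` D) (mult x s) \<and>
        is_lub_in (nat_le padd) ((\<lambda>d. mult d x) ` D) (mult s x))"

definition has_top :: "('u \<Rightarrow> 'u \<Rightarrow> 'u option) \<Rightarrow> bool" where
  "has_top padd \<longleftrightarrow> (\<exists>t. \<forall>u. nat_le padd u t)"

definition cont_partial_semiring ::
  "('u \<Rightarrow> 'u \<Rightarrow> 'u option) \<Rightarrow> ('u \<Rightarrow> 'u \<Rightarrow> 'u) \<Rightarrow> 'u \<Rightarrow> 'u \<Rightarrow> bool" where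
  "cont_partial_semiring padd mult zero one \<longleftrightarrow>
     partial_semiring padd mult zero one \<and> naturally_ordered padd \<and>
     scott_continuous padd mult \<and> has_top padd"

text \<open>Finite sums along a list, and over a finite set (order irrelevant by
  commutativity/associativity).\<close>
fun psum_list :: "('u \<Rightarrow> 'u \<Rightarrow> 'u option) \<Rightarrow> 'u \<Rightarrow> ('x \<Rightarrow> 'u) \<Rightarrow> 'x list \<Rightarrow> 'u option" where
  "psum_list padd zero g [] = Some zero"
| "psum_list padd zero g (x # xs) = Option.bind (psum_list padd zero g xs) (padd (g x))"

definition fsum :: "('u \<Rightarrow> 'u \<Rightarrow> 'u option) \<Rightarrow> 'u \<Rightarrow> ('x \<Rightarrow> 'u) \<Rightarrow> 'x set \<Rightarrow> 'u option" where
  "fsum padd zero g F = psum_list padd zero g (SOME xs. distinct xs \<and> set xs = F)"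

definition has_psum :: "('u \<Rightarrow> 'u \<Rightarrow> 'u option) \<Rightarrow> 'u \<Rightarrow> ('x \<Rightarrow> 'u) \<Rightarrow> 'x set \<Rightarrow> 'u \<Rightarrow> bool" where
  "has_psum padd zero g S s \<longleftrightarrow>
     (\<forall>F. finite F \<and> F \<subseteq> S \<longrightarrow> fsum padd zero g F \<noteq> None) \<and>
     is_lub_in (nat_le padd) {the (fsum padd zero g F) | F. finite F \<and> F \<subseteq> S} s"

definition supp :: "'u \<Rightarrow> ('x \<Rightarrow> 'u) \<Rightarrow> 'x set" where
  "supp zero m = {x. m x \<noteq> zero}"

definition weightings :: "('u \<Rightarrow> 'u \<Rightarrow> 'u option) \<Rightarrow> 'u \<Rightarrow> ('x \<Rightarrow> 'u) set" where
  "weightings padd zero = {m. countable (supp zero m) \<and> (\<exists>s. has_psum padd zero m (supp zero m) s)}"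

end

theory Submission
  imports Defs
begin

text \<open>Fix y. For finite F \<subseteq> supp m the partial sums
  \<Sum>x\<in>F. m x \<cdot> f x y are defined, and so is their sum over any finite set of
  y's: after swapping the two sums, it is bounded by (\<Sum>x\<in>F. m x) \<cdot> \<top>.
  These partial sums form a directed set, so f\<dagger>(m)(y) exists as their supremum.
  A finite sum of such suprema is defined because Scott continuity of addition lets us
  replace the summands by their suprema one at a time. Finally f\<dagger>(m)(y) = 0
  unless y \<in> supp (f x) for some x \<in> supp m, so the support of
  f\<dagger>(m) is countable.\<close>

text \<open>Lifting a partial addition to options, with None absorbing, yields a total
  commutative monoid; finite sums are then the library's big operator over it, and a sum is
  defined iff its value is not None.\<close>

definition oadd :: "('u \<Rightarrow> 'u \<Rightarrow> 'u option) \<Rightarrow> 'u option \<Rightarrow> 'u option \<Rightarrow> 'u option" where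
  "oadd padd a b = (case a of None \<Rightarrow> None | Some x \<Rightarrow> (case b of None \<Rightarrow> None | Some y \<Rightarrow> padd x y))"

lemma oadd_simps [simp]:
  "oadd padd None b = None" "oadd padd a None = None" "oadd padd (Some x) (Some y) = padd x y"
  by (auto simp: oadd_def split: option.splits)

lemma directed_image:
  assumes "I \<noteq> {}"
    and "\<And>i j. i \<in> I \<Longrightarrow> j \<in> I \<Longrightarrow> \<exists>k\<in>I. le (a i) (a k) \<and> le (a j) (a k)"
  shows "directed_in le (a ` I)"
  using assms unfolding directed_in_def by blast

locale partial_comm_monoid =
  fixes padd :: "'u \<Rightarrow> 'u \<Rightarrow> 'u option" and zero :: 'u
  assumes padd_commute: "padd x y = padd y x"
    and padd_assoc: "Option.bind (padd x y) (\<lambda>a. padd a z) = Option.bind (padd y z) (padd x)"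
    and padd_zero_left [simp]: "padd zero x = Some x"
begin

lemma padd_zero_right [simp]: "padd x zero = Some x"
  using padd_commute padd_zero_left by metis

lemma oadd_commute: "oadd padd a b = oadd padd b a"
  by (cases a; cases b) (auto simp: padd_commute)

lemma oadd_assoc: "oadd padd (oadd padd a b) c = oadd padd a (oadd padd b c)"
proof (cases a; cases b; cases c)
  fix x y z assume "a = Some x" "b = Some y" "c = Some z"
  then show ?thesis
    using padd_assoc[of x y z] by (cases "padd x y"; cases "padd y z") auto
qed auto

lemma oadd_zero_right [simp]: "oadd padd a (Some zero) = a"
  by (cases a) auto

lemma oadd_zero_left [simp]: "oadd padd (Some zero) a = a"
  by (cases a) auto

lemma oadd_left_commute: "oadd padd a (oadd padd b c) = oadd padd b (oadd padd a c)"
  by (metis oadd_assoc oadd_commute)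

lemmas oadd_ac = oadd_assoc oadd_commute oadd_left_commute

sublocale opt: comm_monoid_list_set "oadd padd" "Some zero"
  by unfold_locales (rule oadd_assoc oadd_commute oadd_zero_right oadd_zero_left)+

abbreviation osum :: "('x \<Rightarrow> 'u option) \<Rightarrow> 'x set \<Rightarrow> 'u option" where
  "osum \<equiv> opt.set.F"

lemma bind_padd_eq_oadd: "Option.bind b (padd a) = oadd padd (Some a) b"
  by (cases b) auto

lemma psum_list_eq_opt_list: "psum_list padd zero g xs = opt.list.F (map (\<lambda>x. Some (g x)) xs)"
  by (induction xs) (simp_all add: bind_padd_eq_oadd)

lemma fsum_eq_osum: "finite F \<Longrightarrow> fsum padd zero g F = osum (\<lambda>x. Some (g x)) F"
  unfolding fsum_def psum_list_eq_opt_list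
  by (metis (mono_tags, lifting) finite_distinct_list opt.distinct_set_conv_list someI_ex)

definition ole :: "'u option \<Rightarrow> 'u option \<Rightarrow> bool" where
  "ole a b \<longleftrightarrow> (\<exists>w. oadd padd a w = b)"

lemma ole_refl: "ole a a"
  unfolding ole_def using oadd_zero_right by blast

lemma ole_oadd_mono: "ole a b \<Longrightarrow> ole a' b' \<Longrightarrow> ole (oadd padd a a') (oadd padd b b')"
  unfolding ole_def by (metis oadd_ac)

lemma ole_oadd_right: "ole a (oadd padd a b)"
  unfolding ole_def by blast

lemma ole_defined: "ole a b \<Longrightarrow> b \<noteq> None \<Longrightarrow> a \<noteq> None"
  unfolding ole_def by (metis oadd_simps(1))

lemma ole_Some_iff: "ole (Some a) (Some b) \<longleftrightarrow> nat_le padd a b"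
  unfolding ole_def nat_le_def by (metis oadd_simps(2,3) not_None_eq)

lemma osum_mono: "finite A \<Longrightarrow> (\<And>i. i \<in> A \<Longrightarrow> ole (a i) (b i)) \<Longrightarrow> ole (osum a A) (osum b A)"
  by (induction A rule: finite_induct) (auto simp: ole_refl intro: ole_oadd_mono)

lemma osum_subset_mono: "finite B \<Longrightarrow> A \<subseteq> B \<Longrightarrow> ole (osum a A) (osum a B)"
  using opt.set.subset_diff[of A B a] oadd_commute ole_oadd_right by metis

lemma fsum_subset_nat_le:
  assumes "finite B" "A \<subseteq> B" "fsum padd zero h A = Some s" "fsum padd zero h B = Some t"
  shows "nat_le padd s t"
  using osum_subset_mono[of B A] assms ole_Some_iff finite_subset fsum_eq_osum by metis

lemma directed_partial_sums:
  assumes "\<And>F. finite F \<Longrightarrow> F \<subseteq> S \<Longrightarrow> fsum padd zero h F \<noteq> None"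
  shows "directed_in (nat_le padd) {the (fsum padd zero h F) | F. finite F \<and> F \<subseteq> S}"
proof -
  have "{the (fsum padd zero h F) | F. finite F \<and> F \<subseteq> S} =
      (\<lambda>F. the (fsum padd zero h F)) ` {F. finite F \<and> F \<subseteq> S}"
    by blast
  moreover have "\<exists>K\<in>{F. finite F \<and> F \<subseteq> S}.
      nat_le padd (the (fsum padd zero h F)) (the (fsum padd zero h K)) \<and>
      nat_le padd (the (fsum padd zero h F')) (the (fsum padd zero h K))"
    if "F \<in> {F. finite F \<and> F \<subseteq> S}" "F' \<in> {F. finite F \<and> F \<subseteq> S}" for F F'
  proof -
    have "fsum padd zero h A = Some (the (fsum padd zero h A))" if "finite A" "A \<subseteq> S" for A
      using assms that by auto
    then show ?thesis
      using that by (intro bexI[of _ "F \<union> F'"] conjI fsum_subset_nat_le) auto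
  qed
  ultimately show ?thesis
    by (metis (no_types, lifting) directed_image empty_iff finite.emptyI mem_Collect_eq empty_subsetI)
qed

lemma weighting_osum_defined:
  assumes "h \<in> weightings padd zero" "finite G"
  shows "osum (\<lambda>y. Some (h y)) G \<noteq> None"
proof -
  have "osum (\<lambda>y. Some (h y)) G = osum (\<lambda>y. Some (h y)) (G \<inter> supp zero h)"
    by (rule opt.set.mono_neutral_right) (auto simp: assms supp_def)
  also have "\<dots> = fsum padd zero h (G \<inter> supp zero h)"
    by (simp add: assms fsum_eq_osum)
  also have "\<dots> \<noteq> None"
    using assms unfolding weightings_def has_psum_def by auto
  finally show ?thesis .
qed

end

locale cont_psemiring =
  fixes padd :: "'u \<Rightarrow> 'u \<Rightarrow> 'u option" and mult :: "'u \<Rightarrow> 'u \<Rightarrow> 'u" and zero one :: 'u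
  assumes cont_partial_semiring: "cont_partial_semiring padd mult zero one"

sublocale cont_psemiring \<subseteq> partial_comm_monoid padd zero
  using cont_partial_semiring
  unfolding cont_partial_semiring_def partial_semiring_def
  by unfold_locales blast+

context cont_psemiring
begin

lemma distrib:
  "padd a b = Some s \<Longrightarrow>
     padd (mult c a) (mult c b) = Some (mult c s) \<and> padd (mult a c) (mult b c) = Some (mult s c)"
  using cont_partial_semiring unfolding cont_partial_semiring_def partial_semiring_def by blast

lemma mult_zero [simp]: "mult zero a = zero" "mult a zero = zero"
  using cont_partial_semiring unfolding cont_partial_semiring_def partial_semiring_def by blast+

lemma nat_le_antisym: "nat_le padd a b \<Longrightarrow> nat_le padd b a \<Longrightarrow> a = b"
  using cont_partial_semiring unfolding cont_partial_semiring_def naturally_ordered_def by blast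

lemma directed_has_lub: "directed_in (nat_le padd) D \<Longrightarrow> \<exists>s. is_lub_in (nat_le padd) D s"
  using cont_partial_semiring unfolding cont_partial_semiring_def scott_continuous_def by blast

lemma padd_lub_defined:
  "directed_in (nat_le padd) D \<Longrightarrow> is_lub_in (nat_le padd) D s \<Longrightarrow>
     (\<And>d. d \<in> D \<Longrightarrow> padd a d \<noteq> None) \<Longrightarrow> padd a s \<noteq> None"
  using cont_partial_semiring unfolding cont_partial_semiring_def scott_continuous_def by blast

lemma oadd_lub_defined:
  assumes "directed_in (nat_le padd) D" "is_lub_in (nat_le padd) D s"
    and "\<And>d. d \<in> D \<Longrightarrow> oadd padd b (Some d) \<noteq> None"
  shows "oadd padd b (Some s) \<noteq> None"
proof -
  obtain d where "d \<in> D"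
    using assms(1) unfolding directed_in_def by blast
  then obtain v where "b = Some v"
    using assms(3) by (cases b) auto
  then show ?thesis
    using padd_lub_defined[OF assms(1,2)] assms(3) by auto
qed

lemma nat_le_top: "\<exists>t. \<forall>a. nat_le padd a t"
  using cont_partial_semiring unfolding cont_partial_semiring_def has_top_def by blast

lemma lub_unique: "is_lub_in (nat_le padd) D s \<Longrightarrow> is_lub_in (nat_le padd) D t \<Longrightarrow> s = t"
  unfolding is_lub_in_def using nat_le_antisym by blast

lemma nat_le_mult_left: "nat_le padd a b \<Longrightarrow> nat_le padd (mult c a) (mult c b)"
  unfolding nat_le_def using distrib by blast

lemma osum_mult_left:
  "finite A \<Longrightarrow> osum (\<lambda>i. Some (h i)) A = Some s \<Longrightarrow>
     osum (\<lambda>i. Some (mult c (h i))) A = Some (mult c s)"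
proof (induction A arbitrary: s rule: finite_induct)
  case (insert x F)
  then obtain s' where "osum (\<lambda>i. Some (h i)) F = Some s'" "padd (h x) s' = Some s"
    by (cases "osum (\<lambda>i. Some (h i)) F") auto
  then show ?case using insert distrib by simp
qed simp

lemma osum_mult_right:
  "finite A \<Longrightarrow> osum (\<lambda>i. Some (h i)) A = Some s \<Longrightarrow>
     osum (\<lambda>i. Some (mult (h i) c)) A = Some (mult s c)"
proof (induction A arbitrary: s rule: finite_induct)
  case (insert x F)
  then obtain s' where "osum (\<lambda>i. Some (h i)) F = Some s'" "padd (h x) s' = Some s"
    by (cases "osum (\<lambda>i. Some (h i)) F") auto
  then show ?case using insert distrib by simp
qed simp

lemma has_psum_exists:
  assumes "\<And>F. finite F \<Longrightarrow> F \<subseteq> S \<Longrightarrow> fsum padd zero h F \<noteq> None"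
  shows "\<exists>s. has_psum padd zero h S s"
proof -
  obtain s where "is_lub_in (nat_le padd) {the (fsum padd zero h F) | F. finite F \<and> F \<subseteq> S} s"
    using directed_has_lub[OF directed_partial_sums] assms by blast
  then show ?thesis
    using assms unfolding has_psum_def by blast
qed

lemma has_psum_eq_zero:
  assumes "\<And>x. x \<in> S \<Longrightarrow> h x = zero" and "has_psum padd zero h S s"
  shows "s = zero"
proof -
  have "fsum padd zero h F = Some zero" if "finite F" "F \<subseteq> S" for F
    using that assms(1) by (auto simp: fsum_eq_osum intro: opt.set.neutral)
  then have "{the (fsum padd zero h F) | F. finite F \<and> F \<subseteq> S} = {zero}"
    by force
  then have "is_lub_in (nat_le padd) {zero} s"
    using assms(2) unfolding has_psum_def by simp
  moreover have "is_lub_in (nat_le padd) {zero} zero"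
    unfolding is_lub_in_def nat_le_def by auto
  ultimately show ?thesis by (rule lub_unique)
qed

lemma double_osum_defined:
  assumes "finite F" "finite G"
    and "osum (\<lambda>x. Some (m x)) F \<noteq> None"
    and "\<And>x. x \<in> F \<Longrightarrow> osum (\<lambda>y. Some (h x y)) G \<noteq> None"
  shows "osum (\<lambda>y. osum (\<lambda>x. Some (mult (m x) (h x y))) F) G \<noteq> None"
proof -
  obtain t where t: "\<And>a. nat_le padd a t" using nat_le_top by blast
  obtain M where M: "osum (\<lambda>x. Some (m x)) F = Some M" using assms(3) by blast
  have "osum (\<lambda>y. osum (\<lambda>x. Some (mult (m x) (h x y))) F) G =
      osum (\<lambda>x. osum (\<lambda>y. Some (mult (m x) (h x y))) G) F"
    by (rule opt.set.swap)
  also have "ole \<dots> (osum (\<lambda>x. Some (mult (m x) t)) F)"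
  proof (rule osum_mono[OF assms(1)])
    fix x assume "x \<in> F"
    then obtain s where "osum (\<lambda>y. Some (h x y)) G = Some s" using assms(4) by blast
    then have "osum (\<lambda>y. Some (mult (m x) (h x y))) G = Some (mult (m x) s)"
      by (rule osum_mult_left[OF assms(2)])
    then show "ole (osum (\<lambda>y. Some (mult (m x) (h x y))) G) (Some (mult (m x) t))"
      by (simp add: ole_Some_iff nat_le_mult_left t)
  qed
  also have "osum (\<lambda>x. Some (mult (m x) t)) F = Some (mult M t)"
    by (rule osum_mult_right[OF assms(1) M])
  finally show ?thesis using ole_defined by blast
qed

lemma oadd_osum_lubs_defined:
  fixes a :: "'i \<Rightarrow> 'y \<Rightarrow> 'u"
  assumes "finite G" and "I \<noteq> {}"
    and upper: "\<And>i j. i \<in> I \<Longrightarrow> j \<in> I \<Longrightarrow>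
      \<exists>k\<in>I. \<forall>y. nat_le padd (a i y) (a k y) \<and> nat_le padd (a j y) (a k y)"
    and lub: "\<And>y. is_lub_in (nat_le padd) ((\<lambda>i. a i y) ` I) (g y)"
    and "\<forall>i\<in>I. oadd padd c (osum (\<lambda>y. Some (a i y)) G) \<noteq> None"
  shows "oadd padd c (osum (\<lambda>y. Some (g y)) G) \<noteq> None"
  using assms(1,5)
  \<comment> \<open>Induction on G generalising over c: the summands are replaced by their suprema
    one at a time, those already replaced being absorbed into c.\<close>
proof (induction G arbitrary: c rule: finite_induct)
  case empty
  then show ?case using \<open>I \<noteq> {}\<close> by auto
next
  case (insert y0 G)
  have sum_insert: "osum b (insert y0 G) = oadd padd (b y0) (osum b G)" for b
    using insert.hyps by simp
  have directed: "directed_in (nat_le padd) ((\<lambda>i. a i y0) ` I)"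
    using directed_image[OF \<open>I \<noteq> {}\<close>] upper by metis
  have "oadd padd (oadd padd c (Some (g y0))) (osum (\<lambda>y. Some (a i0 y)) G) \<noteq> None"
    if "i0 \<in> I" for i0
  proof -
    let ?X = "osum (\<lambda>y. Some (a i0 y)) G"
    have "oadd padd (oadd padd c ?X) (Some (a i y0)) \<noteq> None" if "i \<in> I" for i
    proof -
      obtain k where k: "k \<in> I" "\<And>y. nat_le padd (a i y) (a k y) \<and> nat_le padd (a i0 y) (a k y)"
        using upper[OF \<open>i \<in> I\<close> \<open>i0 \<in> I\<close>] by blast
      have X_le: "ole ?X (osum (\<lambda>y. Some (a k y)) G)"
        using insert.hyps(1) k(2) by (intro osum_mono) (auto simp: ole_Some_iff)
      have "oadd padd (oadd padd c ?X) (Some (a i y0)) = oadd padd c (oadd padd (Some (a i y0)) ?X)"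
        by (simp only: oadd_ac)
      also have "ole \<dots> (oadd padd c (osum (\<lambda>y. Some (a k y)) (insert y0 G)))"
        unfolding sum_insert using X_le k(2) by (intro ole_oadd_mono ole_refl) (auto simp: ole_Some_iff)
      finally show ?thesis
        using insert.prems k(1) ole_defined by blast
    qed
    then have "oadd padd (oadd padd c ?X) (Some (g y0)) \<noteq> None"
      using oadd_lub_defined[OF directed lub] by blast
    then show ?thesis
      by (metis oadd_ac)
  qed
  then have "oadd padd (oadd padd c (Some (g y0))) (osum (\<lambda>y. Some (g y)) G) \<noteq> None"
    using insert.IH by blast
  then show ?case unfolding sum_insert by (metis oadd_ac)
qed

lemma kleisli_ext_has_psum:
  assumes "\<And>x. f x \<in> weightings padd zero" and "m \<in> weightings padd zero"
  shows "\<exists>s. has_psum padd zero (\<lambda>x. mult (m x) (f x y)) (supp zero m) s"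
proof (rule has_psum_exists)
  fix F assume F: "finite F" "F \<subseteq> supp zero m"
  have "osum (\<lambda>y'. osum (\<lambda>x. Some (mult (m x) (f x y'))) F) {y} \<noteq> None"
    using F assms by (intro double_osum_defined weighting_osum_defined) auto
  then show "fsum padd zero (\<lambda>x. mult (m x) (f x y)) F \<noteq> None"
    using F by (simp add: fsum_eq_osum)
qed

lemma kleisli_ext_supp_subset:
  assumes "\<And>y. has_psum padd zero (\<lambda>x. mult (m x) (f x y)) (supp zero m) (g y)"
  shows "supp zero g \<subseteq> (\<Union>x\<in>supp zero m. supp zero (f x))"
proof
  fix y assume y: "y \<in> supp zero g"
  have "\<exists>x\<in>supp zero m. f x y \<noteq> zero"
  proof (rule ccontr)
    assume "\<not> ?thesis"
    then have "g y = zero"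
      by (intro has_psum_eq_zero[OF _ assms]) auto
    then show False
      using y by (simp add: supp_def)
  qed
  then show "y \<in> (\<Union>x\<in>supp zero m. supp zero (f x))"
    by (auto simp: supp_def)
qed

lemma kleisli_ext_osum_defined:
  assumes fw: "\<And>x. f x \<in> weightings padd zero" and mw: "m \<in> weightings padd zero"
    and g: "\<And>y. has_psum padd zero (\<lambda>x. mult (m x) (f x y)) (supp zero m) (g y)"
    and "finite G"
  shows "osum (\<lambda>y. Some (g y)) G \<noteq> None"
proof -
  let ?I = "{F. finite F \<and> F \<subseteq> supp zero m}"
  define a where "a F y = the (fsum padd zero (\<lambda>x. mult (m x) (f x y)) F)" for F y
  have a: "fsum padd zero (\<lambda>x. mult (m x) (f x y)) F = Some (a F y)" if "F \<in> ?I" for F y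
    using g[of y] that unfolding has_psum_def a_def by auto
  have "oadd padd (Some zero) (osum (\<lambda>y. Some (g y)) G) \<noteq> None"
  proof (rule oadd_osum_lubs_defined[where a = a and I = ?I])
    show "\<exists>K\<in>?I. \<forall>y. nat_le padd (a F y) (a K y) \<and> nat_le padd (a F' y) (a K y)"
      if "F \<in> ?I" "F' \<in> ?I" for F F'
    proof (intro bexI[of _ "F \<union> F'"] allI conjI)
      fix y
      show "nat_le padd (a F y) (a (F \<union> F') y)" "nat_le padd (a F' y) (a (F \<union> F') y)"
        by (rule fsum_subset_nat_le[OF _ _ a a]; use that in auto)+
    qed (use that in auto)
    show "is_lub_in (nat_le padd) ((\<lambda>F. a F y) ` ?I) (g y)" for y
      using g[of y] unfolding has_psum_def a_def by (simp add: setcompr_eq_image)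
    show "\<forall>F\<in>?I. oadd padd (Some zero) (osum (\<lambda>y. Some (a F y)) G) \<noteq> None"
    proof
      fix F assume F: "F \<in> ?I"
      have "osum (\<lambda>y. Some (a F y)) G = osum (\<lambda>y. osum (\<lambda>x. Some (mult (m x) (f x y))) F) G"
        using F by (intro opt.set.cong) (auto simp: a[symmetric] fsum_eq_osum)
      also have "\<dots> \<noteq> None"
        using F \<open>finite G\<close> fw mw by (intro double_osum_defined weighting_osum_defined) auto
      finally show "oadd padd (Some zero) (osum (\<lambda>y. Some (a F y)) G) \<noteq> None"
        by simp
    qed
  qed (use \<open>finite G\<close> in auto)
  then show ?thesis
    by simp
qed

lemma kleisli_ext_in_weightings:
  assumes fw: "\<And>x. f x \<in> weightings padd zero" and mw: "m \<in> weightings padd zero"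
    and g: "\<And>y. has_psum padd zero (\<lambda>x. mult (m x) (f x y)) (supp zero m) (g y)"
  shows "g \<in> weightings padd zero"
proof -
  have "countable (\<Union>x\<in>supp zero m. supp zero (f x))"
    using fw mw unfolding weightings_def by auto
  then have "countable (supp zero g)"
    by (rule countable_subset[OF kleisli_ext_supp_subset[OF g]])
  moreover have "\<exists>s. has_psum padd zero g (supp zero g) s"
    by (rule has_psum_exists) (simp add: fsum_eq_osum kleisli_ext_osum_defined[OF fw mw g])
  ultimately show ?thesis
    unfolding weightings_def by blast
qed

end

theorem lemmaA3:
  fixes padd :: "'u \<Rightarrow> 'u \<Rightarrow> 'u option" and mult :: "'u \<Rightarrow> 'u \<Rightarrow> 'u"
    and zero one :: 'u
    and f :: "'x \<Rightarrow> 'y \<Rightarrow> 'u" and m :: "'x \<Rightarrow> 'u"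
  assumes "cont_partial_semiring padd mult zero one"
    and "\<forall>x. f x \<in> weightings padd zero"
    and "m \<in> weightings padd zero"
  shows "\<exists>g :: 'y \<Rightarrow> 'u.
           (\<forall>y. has_psum padd zero (\<lambda>x. mult (m x) (f x y)) (supp zero m) (g y)) \<and>
           g \<in> weightings padd zero"
proof -
  interpret cont_psemiring padd mult zero one by unfold_locales (rule assms(1))
  obtain g where g: "\<And>y. has_psum padd zero (\<lambda>x. mult (m x) (f x y)) (supp zero m) (g y)"
    using kleisli_ext_has_psum[of f m] assms(2,3) by metis
  then show ?thesis
    using kleisli_ext_in_weightings[of f m g] assms(2,3) by blast
qed

end
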